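(* Let $N,K\ge1$ be integers and $\mathcal X\subseteq\{\pm1\}^N$. Any function $f:\mathcal X\to\{\pm1\}$ that depends on at most $K$ coordinates is a $(K,2,3,\xi)$-PTF for $\xi=\frac1{K2^{(K+2)/2}}$. As a result, in the setting described in the context, $(\mathcal L,\mathbf e)$ is an $(r,K,2,3,\xi)$-hierarchy for $\mathbf f^*$.
   Context: $\|p\|_{\mathrm{co}}$ is the Euclidean norm of the coefficient vector of $p$. For $\mathcal Y\subseteq[-1,1]^s$, $\mathcal B_r(\mathbf x)=\{\tilde{\mathbf x}\in[-1,1]^s:\|\mathbf x-\tilde{\mathbf x}\|_\infty\le r\}$, and $f:\mathcal Y\to\{\pm1\}$ is a $(K,M,B,\xi)$-PTF if there is a polynomial $p$ of degree $\le K$, $\|p\|_{\mathrm{co}}\le M$, with $B\ge p(\tilde{\mathbf x})f(\mathbf x)\ge1$ for all $\mathbf x\in\mathcal Y$, $\tilde{\mathbf x}\in\mathcal B_\xi(\mathbf x)$. Setting for the second sentence: $\mathcal X\subseteq\{\pm1\}^d$, $G$ a finite set, $\mathbf e=(e_1,\ldots,e_w):G\to G^w$ with $e_1(g)=g$; for $\vec{\mathbf x}=(\mathbf x_g)_{g\in G}$, $E_g(\vec{\mathbf x})=(\mathbf x_{e_1(g)}|\cdots|\mathbf x_{e_w(g)})$ (concatenation). $\mathbf f^*:\mathcal X^G\to\{\pm1\}^{n,G}$ has coordinates $f^*_{j,g}$; $\mathcal L=\{L_1\subseteq\cdots\subseteq L_r=[n]\}$. Assume: for $j\in L_1$ there is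 $\tilde f_j:\{\pm1\}^{dw}\to\{\pm1\}$ depending on at most $K$ coordinates with $f^*_{j,g}(\vec{\mathbf x})=\tilde f_j(E_g(\vec{\mathbf x}))$; for $i\ge2$ and $j\in L_i$ there is $\tilde f_j:\{\pm1\}^{wn}\to\{\pm1\}$ depending on at most $K$ coordinates, all in $\{kn+l:0\le k\le w-1,\ l\in L_{i-1}\}$, with $f^*_{j,g}(\vec{\mathbf x})=\tilde f_j(E_g(\mathbf f^*(\vec{\mathbf x})))$, for all $\vec{\mathbf x}\in\mathcal X^G$, $g\in G$. An $(r,K,M,B,\xi)$-hierarchy $(\mathcal L,\mathbf e)$ means: each $f^*_{j,g}$, $j\in L_1$, equals $\tilde f_j(E_g(\vec{\mathbf x}))$ for a $(K,M,B,\xi)$-PTF $\tilde f_j$ on $\mathcal X^w$, and for $i\ge2$, $j\in L_i$, equals $\tilde f_j(E_g(\mathbf f^*_{L_{i-1}}(\vec{\mathbf x})))$ for a $(K,M,B,\xi)$-PTF $\tilde f_j$ on $\{\pm1\}^{|L_{i-1}|w}$, where $\mathbf f^*_{L}$ keeps the coordinates in $L$. *)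

theory Defs
  imports Complex_Main
begin

text \<open>Points of [-1,1]^s and of {+-1}^s are real lists of length s (0-indexed coordinates).\<close>

definition sign_cube :: "nat \<Rightarrow> real list set" where
  "sign_cube m = {x. length x = m \<and> set x \<subseteq> {-1, 1}}"

definition unit_cube :: "nat \<Rightarrow> real list set" where
  "unit_cube s = {x. length x = s \<and> (\<forall>i<s. \<bar>x ! i\<bar> \<le> 1)}"

definition cube_ball :: "real \<Rightarrow> real list \<Rightarrow> real list set" where
  "cube_ball r x = {y. length y = length x \<and>
      (\<forall>i<length x. \<bar>y ! i\<bar> \<le> 1 \<and> \<bar>x ! i - y ! i\<bar> \<le> r)}"

text \<open>A real polynomial in s variables, given by its coefficient function on exponent
  vectors alpha (monomial prod_i x_i^(alpha i)); finitely many nonzero coefficients,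
  all monomials in variables < s and of total degree \<le> K.\<close>
definition is_poly :: "nat \<Rightarrow> nat \<Rightarrow> ((nat \<Rightarrow> nat) \<Rightarrow> real) \<Rightarrow> bool" where
  "is_poly s K c \<longleftrightarrow> finite {\<alpha>. c \<alpha> \<noteq> 0} \<and>
     (\<forall>\<alpha>. c \<alpha> \<noteq> 0 \<longrightarrow> (\<forall>i\<ge>s. \<alpha> i = 0) \<and> (\<Sum>i<s. \<alpha> i) \<le> K)"

definition poly_eval :: "nat \<Rightarrow> ((nat \<Rightarrow> nat) \<Rightarrow> real) \<Rightarrow> real list \<Rightarrow> real" where
  "poly_eval s c x = (\<Sum>\<alpha>\<in>{\<alpha>. c \<alpha> \<noteq> 0}. c \<alpha> * (\<Prod>i<s. (x ! i) ^ (\<alpha> i)))"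

definition coef_norm :: "((nat \<Rightarrow> nat) \<Rightarrow> real) \<Rightarrow> real" where
  "coef_norm c = sqrt (\<Sum>\<alpha>\<in>{\<alpha>. c \<alpha> \<noteq> 0}. (c \<alpha>)^2)"

definition is_PTF :: "nat \<Rightarrow> nat \<Rightarrow> real \<Rightarrow> real \<Rightarrow> real \<Rightarrow> real list set
    \<Rightarrow> (real list \<Rightarrow> real) \<Rightarrow> bool" where
  "is_PTF s K M B \<xi> Y f \<longleftrightarrow> Y \<subseteq> unit_cube s \<and> (\<forall>x\<in>Y. f x \<in> {-1, 1}) \<and>
     (\<exists>c. is_poly s K c \<and> coef_norm c \<le> M \<and>
        (\<forall>x\<in>Y. \<forall>y\<in>cube_ball \<xi> x.
            1 \<le> poly_eval s c y * f x \<and> poly_eval s c y * f x \<le> B))"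

definition depends_only_on :: "nat set \<Rightarrow> real list set \<Rightarrow> (real list \<Rightarrow> real) \<Rightarrow> bool" where
  "depends_only_on S Y f \<longleftrightarrow>
     (\<forall>x\<in>Y. \<forall>y\<in>Y. (\<forall>i\<in>S. x ! i = y ! i) \<longrightarrow> f x = f y)"

definition depends_on_at_most :: "nat \<Rightarrow> nat \<Rightarrow> real list set \<Rightarrow> (real list \<Rightarrow> real) \<Rightarrow> bool" where
  "depends_on_at_most s K Y f \<longleftrightarrow>
     (\<exists>S. S \<subseteq> {..<s} \<and> card S \<le> K \<and> depends_only_on S Y f)"

definition xi_of :: "nat \<Rightarrow> real" where
  "xi_of K = 1 / (real K * 2 powr ((real K + 2) / 2))"

text \<open>E_g: concatenation of the blocks indexed by e_1(g),...,e_w(g) (here e g 0, ..., e g (w-1)).\<close>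
definition Eg :: "nat \<Rightarrow> ('g \<Rightarrow> nat \<Rightarrow> 'g) \<Rightarrow> ('g \<Rightarrow> 'a list) \<Rightarrow> 'g \<Rightarrow> 'a list" where
  "Eg w e xv g = concat (map (\<lambda>k. xv (e g k)) [0..<w])"

text \<open>Output f*_L(x): for each g', the vector (f*_{l,g'}(x))_{l \<in> L} in increasing order of l.
  f* is given as fstar xv j g (j \<in> {0..<n}).\<close>
definition fout :: "(('g \<Rightarrow> real list) \<Rightarrow> nat \<Rightarrow> 'g \<Rightarrow> real) \<Rightarrow> nat set
    \<Rightarrow> ('g \<Rightarrow> real list) \<Rightarrow> 'g \<Rightarrow> real list" where
  "fout fstar L xv g' = map (\<lambda>l. fstar xv l g') (sorted_list_of_set L)"

text \<open>X^w as the set of concatenations of w elements of X.\<close>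
definition list_power :: "real list set \<Rightarrow> nat \<Rightarrow> real list set" where
  "list_power X w = {concat xs | xs. length xs = w \<and> set xs \<subseteq> X}"

end

(* On its relevant coordinates S, a junta f is interpolated by
     p(y) = 2^(1 - |S|) * sum over sign patterns a on S of F(a) * prod_(i in S) (1 + a_i y_i),
   where F(a) is the value of f on inputs with pattern a. The coefficients of p are the Fourier
   coefficients of 2F, so by Parseval they have Euclidean norm at most 2. The weights
   prod_(i in S) (1 + a_i y_i) are nonnegative on [-1,1]^S and sum to 2^|S|; when y is xi-close
   to an input x, the weight of the pattern of x alone is at least 2^|S| (1 - |S| xi / 2), hence
   1 <= 2 (1 - |S| xi) <= p(y) f(x) <= 2 whenever K xi <= 1/2.
   For the hierarchy, a layer function that is a junta in those coordinates of E_g of the full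
   output f^* that are indexed by L = L_(i-1) is pulled back along the map sending each
   coordinate of E_g of the restricted output f^*_L to the corresponding coordinate of E_g of
   f^*; it remains a junta on at most K coordinates. *)

theory Submission
  imports Defs "HOL-Analysis.Infinite_Products"
begin

section \<open>Fourier expansion on sign vectors\<close>

definition sign_vectors :: "nat set \<Rightarrow> (nat \<Rightarrow> real) set" where
  "sign_vectors S = PiE S (\<lambda>_. {-1, 1})"

lemma finite_sign_vectors: "finite S \<Longrightarrow> finite (sign_vectors S)"
  unfolding sign_vectors_def by (simp add: finite_PiE)

lemma card_sign_vectors: "finite S \<Longrightarrow> card (sign_vectors S) = 2 ^ card S"
  unfolding sign_vectors_def by (simp add: card_PiE numeral_2_eq_2)

lemma sign_vectors_values: "a \<in> sign_vectors S \<Longrightarrow> i \<in> S \<Longrightarrow> a i = -1 \<or> a i = 1"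
  unfolding sign_vectors_def by (auto simp: PiE_iff)

lemma prod_sign_vectors_agreement:
  assumes "finite S" "a \<in> sign_vectors S" "b \<in> sign_vectors S"
  shows "(\<Prod>i\<in>S. 1 + a i * b i) = (if a = b then 2 ^ card S else 0)"
proof (cases "a = b")
  case True
  then have "(\<Prod>i\<in>S. 1 + a i * b i) = (\<Prod>i\<in>S. 2)"
    using sign_vectors_values[OF assms(2)] by (intro prod.cong) force+
  then show ?thesis using True by simp
next
  case False
  then obtain i where "i \<in> S" "a i \<noteq> b i"
    using assms(2,3) unfolding sign_vectors_def by (metis PiE_ext)
  then have "1 + a i * b i = 0"
    using sign_vectors_values[OF assms(2)] sign_vectors_values[OF assms(3)] by force
  then show ?thesis using False \<open>i \<in> S\<close> assms(1) by (auto simp: prod_zero_iff)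
qed

lemma sum_sign_vectors_prod:
  assumes "finite S"
  shows "(\<Sum>a\<in>sign_vectors S. \<Prod>i\<in>S. 1 + a i * z i) = 2 ^ card S"
proof -
  have "(\<Sum>a\<in>sign_vectors S. \<Prod>i\<in>S. 1 + a i * z i) = (\<Prod>i\<in>S. \<Sum>s\<in>{-1, 1}. 1 + s * z i)"
    unfolding sign_vectors_def by (rule prod_sum_PiE[symmetric]) (use assms in auto)
  then show ?thesis by simp
qed

definition fourier_coeff :: "nat set \<Rightarrow> ((nat \<Rightarrow> real) \<Rightarrow> real) \<Rightarrow> nat set \<Rightarrow> real" where
  "fourier_coeff S F T = (\<Sum>a\<in>sign_vectors S. F a * (\<Prod>i\<in>T. a i)) / 2 ^ card S"

lemma fourier_expansion:
  assumes "finite S"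
  shows "(\<Sum>T\<in>Pow S. fourier_coeff S F T * (\<Prod>i\<in>T. z i))
       = (\<Sum>a\<in>sign_vectors S. F a * (\<Prod>i\<in>S. 1 + a i * z i)) / 2 ^ card S"
proof -
  have subsets: "(\<Sum>T\<in>Pow S. \<Prod>i\<in>T. a i * z i) = (\<Prod>i\<in>S. 1 + a i * z i)" for a
    using prod_add[OF assms, of "\<lambda>i. a i * z i" "\<lambda>_. 1"] by (simp add: add.commute)
  have "(\<Sum>T\<in>Pow S. fourier_coeff S F T * (\<Prod>i\<in>T. z i))
      = (\<Sum>T\<in>Pow S. \<Sum>a\<in>sign_vectors S. F a * (\<Prod>i\<in>T. a i * z i)) / 2 ^ card S"
    unfolding fourier_coeff_def
    by (simp add: sum_divide_distrib sum_distrib_right prod.distrib mult.assoc)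
  also have "\<dots> = (\<Sum>a\<in>sign_vectors S. F a * (\<Sum>T\<in>Pow S. \<Prod>i\<in>T. a i * z i)) / 2 ^ card S"
    by (subst sum.swap) (simp add: sum_distrib_left)
  finally show ?thesis by (simp add: subsets)
qed

lemma fourier_inversion:
  assumes "finite S" "b \<in> sign_vectors S"
  shows "(\<Sum>T\<in>Pow S. fourier_coeff S F T * (\<Prod>i\<in>T. b i)) = F b"
proof -
  have "(\<Sum>a\<in>sign_vectors S. F a * (\<Prod>i\<in>S. 1 + a i * b i))
      = (\<Sum>a\<in>sign_vectors S. if a = b then F a * 2 ^ card S else 0)"
    using prod_sign_vectors_agreement[OF assms(1) _ assms(2)] by (intro sum.cong) auto
  also have "\<dots> = F b * 2 ^ card S"
    using assms by (simp add: finite_sign_vectors)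
  finally show ?thesis by (simp add: fourier_expansion[OF assms(1)])
qed

lemma fourier_parseval:
  assumes "finite S"
  shows "(\<Sum>T\<in>Pow S. (fourier_coeff S F T)\<^sup>2) = (\<Sum>a\<in>sign_vectors S. (F a)\<^sup>2) / 2 ^ card S"
proof -
  have "(\<Sum>T\<in>Pow S. (fourier_coeff S F T)\<^sup>2)
      = (\<Sum>T\<in>Pow S. \<Sum>b\<in>sign_vectors S. F b * (fourier_coeff S F T * (\<Prod>i\<in>T. b i))) / 2 ^ card S"
    unfolding power2_eq_square
    by (subst (2) fourier_coeff_def) (simp add: sum_divide_distrib sum_distrib_left ac_simps)
  also have "\<dots> = (\<Sum>b\<in>sign_vectors S. F b * (\<Sum>T\<in>Pow S. fourier_coeff S F T * (\<Prod>i\<in>T. b i))) / 2 ^ card S"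
    by (subst sum.swap) (simp add: sum_distrib_left)
  also have "\<dots> = (\<Sum>b\<in>sign_vectors S. F b * F b) / 2 ^ card S"
    using fourier_inversion[OF assms] by simp
  finally show ?thesis by (simp add: power2_eq_square)
qed

definition subset_exponent :: "nat set \<Rightarrow> nat \<Rightarrow> nat" where
  "subset_exponent T i = of_bool (i \<in> T)"

definition multilinear_coeffs :: "nat set \<Rightarrow> (nat set \<Rightarrow> real) \<Rightarrow> (nat \<Rightarrow> nat) \<Rightarrow> real" where
  "multilinear_coeffs S C \<alpha> = (if \<alpha> \<in> subset_exponent ` Pow S then C {i. \<alpha> i \<noteq> 0} else 0)"

lemma subset_exponent_support: "{i. subset_exponent T i \<noteq> 0} = T"
  by (simp add: subset_exponent_def)

lemma inj_subset_exponent: "inj subset_exponent"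
  by (rule injI) (metis subset_exponent_support)

lemma multilinear_coeffs_subset_exponent:
  "T \<subseteq> S \<Longrightarrow> multilinear_coeffs S C (subset_exponent T) = C T"
  by (simp add: multilinear_coeffs_def subset_exponent_def)

lemma multilinear_coeffs_support:
  "{\<alpha>. multilinear_coeffs S C \<alpha> \<noteq> 0} \<subseteq> subset_exponent ` Pow S"
  by (auto simp: multilinear_coeffs_def split: if_splits)

lemma sum_multilinear_coeffs:
  assumes "finite S"
  shows "(\<Sum>\<alpha>\<in>{\<alpha>. multilinear_coeffs S C \<alpha> \<noteq> 0}. multilinear_coeffs S C \<alpha> * Z \<alpha>)
       = (\<Sum>T\<in>Pow S. C T * Z (subset_exponent T))"
proof -
  have "(\<Sum>\<alpha>\<in>{\<alpha>. multilinear_coeffs S C \<alpha> \<noteq> 0}. multilinear_coeffs S C \<alpha> * Z \<alpha>)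
      = (\<Sum>\<alpha>\<in>subset_exponent ` Pow S. multilinear_coeffs S C \<alpha> * Z \<alpha>)"
    using multilinear_coeffs_support assms by (intro sum.mono_neutral_left) (auto simp del: Collect_neg_eq)
  also have "\<dots> = (\<Sum>T\<in>Pow S. C T * Z (subset_exponent T))"
    by (simp add: sum.reindex[OF inj_on_subset[OF inj_subset_exponent]]
        multilinear_coeffs_subset_exponent)
  finally show ?thesis .
qed

lemma is_poly_multilinear_coeffs:
  assumes "S \<subseteq> {..<N}" "card S \<le> K"
  shows "is_poly N K (multilinear_coeffs S C)"
proof -
  have "finite S" using assms(1) finite_subset by blast
  have bounds: "(\<forall>i\<ge>N. \<alpha> i = 0) \<and> (\<Sum>i<N. \<alpha> i) \<le> K"
    if \<alpha>: "\<alpha> \<in> subset_exponent ` Pow S" for \<alpha>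
  proof -
    obtain T where T: "\<alpha> = subset_exponent T" "T \<subseteq> S" using \<alpha> by blast
    have "{..<N} \<inter> T = T" using T(2) assms(1) by auto
    then have "(\<Sum>i<N. \<alpha> i) = card T" by (simp add: T(1) subset_exponent_def)
    also have "\<dots> \<le> card S" using T(2) \<open>finite S\<close> by (rule card_mono[rotated])
    finally show ?thesis
      using T assms by (auto simp: subset_exponent_def)
  qed
  have "\<forall>\<alpha>. multilinear_coeffs S C \<alpha> \<noteq> 0 \<longrightarrow> (\<forall>i\<ge>N. \<alpha> i = 0) \<and> (\<Sum>i<N. \<alpha> i) \<le> K"
    using multilinear_coeffs_support[of S C] by (intro allI impI bounds) blast
  moreover have "finite {\<alpha>. multilinear_coeffs S C \<alpha> \<noteq> 0}"
    by (rule finite_subset[OF multilinear_coeffs_support]) (simp add: \<open>finite S\<close>)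
  ultimately show ?thesis unfolding is_poly_def by blast
qed

lemma poly_eval_multilinear_coeffs:
  assumes "S \<subseteq> {..<N}"
  shows "poly_eval N (multilinear_coeffs S C) y = (\<Sum>T\<in>Pow S. C T * (\<Prod>i\<in>T. y ! i))"
proof -
  have "(\<Prod>i<N. (y ! i) ^ subset_exponent T i) = (\<Prod>i\<in>T. y ! i)" if "T \<subseteq> S" for T
  proof -
    have "(\<Prod>i<N. (y ! i) ^ subset_exponent T i) = (\<Prod>i\<in>{..<N} \<inter> T. y ! i)"
      unfolding prod.inter_restrict[OF finite_lessThan]
      by (intro prod.cong) (simp_all add: subset_exponent_def)
    also have "{..<N} \<inter> T = T" using that assms by auto
    finally show ?thesis .
  qed
  then show ?thesis
    using assms finite_subset unfolding poly_eval_def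
    by (subst sum_multilinear_coeffs) (auto intro!: sum.cong)
qed

lemma coef_norm_multilinear_coeffs:
  assumes "finite S"
  shows "coef_norm (multilinear_coeffs S C) = sqrt (\<Sum>T\<in>Pow S. (C T)\<^sup>2)"
  unfolding coef_norm_def power2_eq_square
  using sum_multilinear_coeffs[OF assms, of C "multilinear_coeffs S C"]
  by (simp add: multilinear_coeffs_subset_exponent)

section \<open>Juntas are polynomial threshold functions\<close>

lemma weighted_sum_bounds:
  fixes G W :: "'a \<Rightarrow> real"
  assumes "finite A" "a0 \<in> A" "\<And>a. a \<in> A \<Longrightarrow> 0 \<le> W a" "\<And>a. a \<in> A \<Longrightarrow> \<bar>G a\<bar> \<le> 1"
    and "G a0 = 1"
  shows "2 * W a0 - sum W A \<le> (\<Sum>a\<in>A. G a * W a)" "(\<Sum>a\<in>A. G a * W a) \<le> sum W A"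
proof -
  have G: "- W a \<le> G a * W a \<and> G a * W a \<le> W a" if "a \<in> A" for a
    using mult_right_mono[of "G a" 1 "W a"] mult_right_mono[of "-1" "G a" "W a"] assms(3,4)[OF that]
    by (simp add: abs_le_iff)
  have "(\<Sum>a\<in>A. G a * W a) = W a0 + (\<Sum>a\<in>A - {a0}. G a * W a)"
    using assms(1,2,5) by (simp add: sum.remove)
  also have "(\<Sum>a\<in>A - {a0}. G a * W a) \<ge> (\<Sum>a\<in>A - {a0}. - W a)"
    using G by (intro sum_mono) auto
  moreover have "sum W A = W a0 + (\<Sum>a\<in>A - {a0}. W a)"
    using assms(1,2) by (rule sum.remove)
  ultimately show "2 * W a0 - sum W A \<le> (\<Sum>a\<in>A. G a * W a)" by (simp add: sum_negf)
  show "(\<Sum>a\<in>A. G a * W a) \<le> sum W A"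
    using G by (simp add: sum_mono)
qed

lemma sign_weight_nonneg:
  assumes "a \<in> sign_vectors S" "\<And>i. i \<in> S \<Longrightarrow> \<bar>z i\<bar> \<le> 1"
  shows "0 \<le> (\<Prod>i\<in>S. 1 + a i * z i)"
  using sign_vectors_values[OF assms(1)] assms(2) by (intro prod_nonneg) (force simp: abs_le_iff)

lemma sign_weight_lower_bound:
  fixes \<xi> :: real
  assumes "finite S" "a \<in> sign_vectors S"
    and "\<And>i. i \<in> S \<Longrightarrow> \<bar>z i\<bar> \<le> 1" "\<And>i. i \<in> S \<Longrightarrow> \<bar>a i - z i\<bar> \<le> \<xi>"
  shows "2 ^ card S * (1 - real (card S) * \<xi> / 2) \<le> (\<Prod>i\<in>S. 1 + a i * z i)"
proof -
  define t where "t i = \<bar>a i - z i\<bar> / 2" for i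
  have factor: "1 + a i * z i = 2 * (1 - t i)" and t: "t i \<in> {0..1}" if "i \<in> S" for i
    using sign_vectors_values[OF assms(2) that] assms(3)[OF that] unfolding t_def
    by (elim disjE; auto simp: abs_le_iff abs_if split: if_splits)+
  have "1 - card S * \<xi> / 2 \<le> 1 - sum t S"
    using sum_mono[of S t "\<lambda>_. \<xi> / 2"] assms(4) by (simp add: t_def)
  also have "\<dots> \<le> (\<Prod>i\<in>S. 1 - t i)"
    using t by (rule Weierstrass_prod_ineq)
  finally have "2 ^ card S * (1 - real (card S) * \<xi> / 2) \<le> (\<Prod>i\<in>S. 2) * (\<Prod>i\<in>S. 1 - t i)"
    by simp
  also have "\<dots> = (\<Prod>i\<in>S. 2 * (1 - t i))"
    by (rule prod.distrib[symmetric])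
  also have "\<dots> = (\<Prod>i\<in>S. 1 + a i * z i)"
    using factor by simp
  finally show ?thesis .
qed

text \<open>Near \<open>a0\<close> the weight of \<open>a0\<close> carries almost all of the total mass \<open>2 ^ card S\<close>,
  so a signed average with sign \<open>1\<close> at \<open>a0\<close> stays positive.\<close>
lemma signed_sign_weights_bounds:
  fixes \<xi> :: real
  assumes "finite S" "a0 \<in> sign_vectors S"
    and "\<And>i. i \<in> S \<Longrightarrow> \<bar>z i\<bar> \<le> 1" "\<And>i. i \<in> S \<Longrightarrow> \<bar>a0 i - z i\<bar> \<le> \<xi>"
    and "\<And>a. a \<in> sign_vectors S \<Longrightarrow> \<bar>G a\<bar> \<le> 1" "G a0 = 1"
  shows "2 ^ card S * (1 - real (card S) * \<xi>) \<le> (\<Sum>a\<in>sign_vectors S. G a * (\<Prod>i\<in>S. 1 + a i * z i))"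
    and "(\<Sum>a\<in>sign_vectors S. G a * (\<Prod>i\<in>S. 1 + a i * z i)) \<le> 2 ^ card S"
proof -
  define W where "W a = (\<Prod>i\<in>S. 1 + a i * z i)" for a
  have "0 \<le> W a" if "a \<in> sign_vectors S" for a
    unfolding W_def using that assms(3) by (rule sign_weight_nonneg)
  note bounds = weighted_sum_bounds[of "sign_vectors S" a0 W G,
      OF finite_sign_vectors[OF assms(1)] assms(2) this assms(5,6)]
  have total: "sum W (sign_vectors S) = 2 ^ card S"
    unfolding W_def by (rule sum_sign_vectors_prod[OF assms(1)])
  have "2 ^ card S * (1 - real (card S) * \<xi>) \<le> 2 * (2 ^ card S * (1 - real (card S) * \<xi> / 2)) - 2 ^ card S"
    by (simp add: algebra_simps)
  also have "\<dots> \<le> 2 * W a0 - 2 ^ card S"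
    using sign_weight_lower_bound[OF assms(1-4)] unfolding W_def by simp
  also have "\<dots> \<le> (\<Sum>a\<in>sign_vectors S. G a * W a)"
    using bounds(1) total by simp
  finally show "2 ^ card S * (1 - real (card S) * \<xi>) \<le> (\<Sum>a\<in>sign_vectors S. G a * (\<Prod>i\<in>S. 1 + a i * z i))"
    unfolding W_def .
  show "(\<Sum>a\<in>sign_vectors S. G a * (\<Prod>i\<in>S. 1 + a i * z i)) \<le> 2 ^ card S"
    using bounds(2) total unfolding W_def by simp
qed

lemma in_sign_cube_iff: "x \<in> sign_cube N \<longleftrightarrow> length x = N \<and> (\<forall>i<N. x ! i = -1 \<or> x ! i = 1)"
  unfolding sign_cube_def by (auto simp: set_conv_nth)

lemma sign_cube_subset_unit_cube: "sign_cube N \<subseteq> unit_cube N"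
  unfolding in_sign_cube_iff unit_cube_def subset_iff mem_Collect_eq by (metis abs_minus abs_one order_refl)

lemma restrict_nth_in_sign_vectors:
  "x \<in> sign_cube N \<Longrightarrow> S \<subseteq> {..<N} \<Longrightarrow> restrict (nth x) S \<in> sign_vectors S"
  unfolding sign_vectors_def by (auto simp: in_sign_cube_iff)

text \<open>The value \<open>0\<close> on sign patterns not realised in \<open>X\<close> is arbitrary; any value in
  \<open>[-1, 1]\<close> would do.\<close>
definition junta_table :: "nat set \<Rightarrow> real list set \<Rightarrow> (real list \<Rightarrow> real) \<Rightarrow> (nat \<Rightarrow> real) \<Rightarrow> real" where
  "junta_table S X f a =
     (if \<exists>x\<in>X. restrict (nth x) S = a then f (SOME x. x \<in> X \<and> restrict (nth x) S = a) else 0)"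

lemma junta_table_restrict_nth:
  assumes "depends_only_on S X f" "x \<in> X"
  shows "junta_table S X f (restrict (nth x) S) = f x"
proof -
  define x' where "x' = (SOME x'. x' \<in> X \<and> restrict (nth x') S = restrict (nth x) S)"
  have "x' \<in> X \<and> restrict (nth x') S = restrict (nth x) S"
    unfolding x'_def by (rule someI[of _ x]) (simp add: assms(2))
  then have "f x' = f x"
    using assms unfolding depends_only_on_def by (metis restrict_apply')
  then show ?thesis
    using assms(2) unfolding junta_table_def x'_def by auto
qed

lemma abs_junta_table_le:
  assumes "\<forall>x\<in>X. f x \<in> {-1, 1}"
  shows "\<bar>junta_table S X f a\<bar> \<le> 1"
proof (cases "\<exists>x\<in>X. restrict (nth x) S = a")
  case True
  then have "(SOME x. x \<in> X \<and> restrict (nth x) S = a) \<in> X"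
    by (metis (mono_tags, lifting) someI_ex)
  then show ?thesis using True assms unfolding junta_table_def by auto
qed (simp add: junta_table_def)

definition junta_poly :: "nat set \<Rightarrow> real list set \<Rightarrow> (real list \<Rightarrow> real) \<Rightarrow> (nat \<Rightarrow> nat) \<Rightarrow> real" where
  "junta_poly S X f = multilinear_coeffs S (fourier_coeff S (\<lambda>a. 2 * junta_table S X f a))"

lemma coef_norm_junta_poly_le:
  assumes "finite S" "\<forall>x\<in>X. f x \<in> {-1, 1}"
  shows "coef_norm (junta_poly S X f) \<le> 2"
proof -
  have "coef_norm (junta_poly S X f)
      = sqrt ((\<Sum>a\<in>sign_vectors S. (2 * junta_table S X f a)\<^sup>2) / 2 ^ card S)"
    unfolding junta_poly_def coef_norm_multilinear_coeffs[OF assms(1)] fourier_parseval[OF assms(1)] ..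
  also have "\<dots> \<le> sqrt ((\<Sum>a\<in>sign_vectors S. 2\<^sup>2) / 2 ^ card S)"
    using abs_junta_table_le[OF assms(2)]
    by (intro real_sqrt_le_mono divide_right_mono sum_mono) (simp_all add: abs_square_le_1)
  also have "\<dots> = 2"
    by (simp add: card_sign_vectors[OF assms(1)])
  finally show ?thesis .
qed

lemma poly_eval_junta_poly:
  assumes "S \<subseteq> {..<N}"
  shows "poly_eval N (junta_poly S X f) y
       = 2 * (\<Sum>a\<in>sign_vectors S. junta_table S X f a * (\<Prod>i\<in>S. 1 + a i * y ! i)) / 2 ^ card S"
proof -
  have "poly_eval N (junta_poly S X f) y
      = (\<Sum>T\<in>Pow S. fourier_coeff S (\<lambda>a. 2 * junta_table S X f a) T * (\<Prod>i\<in>T. y ! i))"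
    unfolding junta_poly_def by (rule poly_eval_multilinear_coeffs[OF assms])
  also have "\<dots> = (\<Sum>a\<in>sign_vectors S. 2 * junta_table S X f a * (\<Prod>i\<in>S. 1 + a i * y ! i)) / 2 ^ card S"
    by (rule fourier_expansion[OF finite_subset[OF assms finite_lessThan]])
  finally show ?thesis by (simp add: sum_distrib_left mult.assoc)
qed

lemma junta_poly_margin:
  fixes \<xi> :: real
  assumes X: "X \<subseteq> sign_cube N" and f: "\<forall>x\<in>X. f x \<in> {-1, 1}"
    and S: "S \<subseteq> {..<N}" "real (card S) * \<xi> \<le> 1 / 2" and dS: "depends_only_on S X f"
    and x: "x \<in> X" and y: "y \<in> cube_ball \<xi> x"
  shows "1 \<le> poly_eval N (junta_poly S X f) y * f x \<and> poly_eval N (junta_poly S X f) y * f x \<le> 2"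
proof -
  define F where "F a = junta_table S X f a * f x" for a
  define V where "V = (\<Sum>a\<in>sign_vectors S. F a * (\<Prod>i\<in>S. 1 + a i * y ! i))"
  have "length x = N" using X x by (auto simp: sign_cube_def)
  then have yi: "\<bar>y ! i\<bar> \<le> 1" "\<bar>restrict (nth x) S i - y ! i\<bar> \<le> \<xi>" if "i \<in> S" for i
    using y that S(1) by (auto simp: cube_ball_def)
  have "\<bar>F a\<bar> \<le> 1" if "a \<in> sign_vectors S" for a
    using abs_junta_table_le[OF f] f x unfolding F_def by (auto simp: abs_mult)
  moreover have "F (restrict (nth x) S) = 1"
    using junta_table_restrict_nth[OF dS x] f x unfolding F_def by auto
  ultimately have "2 ^ card S * (1 - real (card S) * \<xi>) \<le> V" "V \<le> 2 ^ card S"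
    using signed_sign_weights_bounds[where z = "\<lambda>i. y ! i", OF finite_subset[OF S(1)]
        restrict_nth_in_sign_vectors[OF subsetD[OF X x] S(1)] yi]
    unfolding V_def by blast+
  moreover have "(2::real) ^ card S * (1 / 2) \<le> 2 ^ card S * (1 - real (card S) * \<xi>)"
    using S(2) by (intro mult_left_mono) auto
  ultimately have "2 ^ card S / 2 \<le> V" "V \<le> 2 ^ card S"
    by linarith+
  moreover have "poly_eval N (junta_poly S X f) y * f x = 2 * V / 2 ^ card S"
    unfolding poly_eval_junta_poly[OF S(1)] V_def F_def by (simp add: sum_distrib_left ac_simps)
  ultimately show ?thesis by (simp only:) (simp add: field_simps)
qed

theorem junta_is_PTF:
  fixes \<xi> :: real
  assumes X: "X \<subseteq> sign_cube N" and f: "\<forall>x\<in>X. f x \<in> {-1, 1}"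
    and dep: "depends_on_at_most N K X f" and \<xi>: "0 \<le> \<xi>" "real K * \<xi> \<le> 1 / 2"
  shows "is_PTF N K 2 3 \<xi> X f"
proof -
  obtain S where S: "S \<subseteq> {..<N}" "card S \<le> K" and dS: "depends_only_on S X f"
    using dep unfolding depends_on_at_most_def by blast
  have "real (card S) * \<xi> \<le> 1 / 2"
    using S(2) \<xi> by (meson of_nat_le_iff mult_right_mono order_trans)
  then have "\<forall>x\<in>X. \<forall>y\<in>cube_ball \<xi> x. 1 \<le> poly_eval N (junta_poly S X f) y * f x \<and>
      poly_eval N (junta_poly S X f) y * f x \<le> 3"
    using junta_poly_margin[OF X f S(1) _ dS] by fastforce
  moreover have "is_poly N K (junta_poly S X f)"
    unfolding junta_poly_def using S by (rule is_poly_multilinear_coeffs)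
  moreover have "coef_norm (junta_poly S X f) \<le> 2"
    using finite_subset[OF S(1)] f by (intro coef_norm_junta_poly_le) auto
  ultimately show ?thesis
    unfolding is_PTF_def using X sign_cube_subset_unit_cube f by blast
qed

lemma xi_of_nonneg: "0 \<le> xi_of K"
  unfolding xi_of_def by simp

lemma xi_of_mult_le: "real K * xi_of K \<le> 1 / 2"
proof (cases "K = 0")
  case False
  have "(2::real) powr 1 \<le> 2 powr ((real K + 2) / 2)"
    by (intro powr_mono) auto
  then show ?thesis using False unfolding xi_of_def by (simp add: divide_simps)
qed simp

lemma depends_on_at_most_mono:
  "depends_on_at_most N K Y f \<Longrightarrow> Y' \<subseteq> Y \<Longrightarrow> K \<le> K' \<Longrightarrow> depends_on_at_most N K' Y' f"
  unfolding depends_on_at_most_def depends_only_on_def by (meson order_trans subsetD)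

lemma junta_restriction_is_PTF:
  assumes "Y \<subseteq> sign_cube N" "\<forall>x\<in>sign_cube N. f x \<in> {-1, 1}"
    and "depends_on_at_most N K (sign_cube N) f"
  shows "is_PTF N K 2 3 (xi_of K) Y f"
proof (rule junta_is_PTF[OF _ _ _ xi_of_nonneg xi_of_mult_le])
  show "Y \<subseteq> sign_cube N" "\<forall>x\<in>Y. f x \<in> {-1, 1}" using assms(1,2) by auto
  show "depends_on_at_most N K Y f" using assms(3,1) order_refl by (rule depends_on_at_most_mono)
qed

section \<open>Coordinates of the hierarchy\<close>

lemma block_index_less: "k < w \<Longrightarrow> t < (m::nat) \<Longrightarrow> k * m + t < w * m"
  by (metis add_less_cancel_left less_le_trans mult_Suc mult_le_mono1 Suc_leI add.commute)

lemma length_concat_blocks: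
  "(\<And>k. k < w \<Longrightarrow> length (B k) = m) \<Longrightarrow> length (concat (map B [0..<w])) = w * m"
  by (induction w) auto

lemma nth_concat_blocks:
  assumes "\<And>k. k < w \<Longrightarrow> length (B k) = m" "k < w" "t < m"
  shows "concat (map B [0..<w]) ! (k * m + t) = B k ! t"
  using assms
proof (induction w)
  case (Suc w)
  have "length (concat (map B [0..<w])) = w * m"
    using Suc.prems(1) by (intro length_concat_blocks) auto
  moreover have "k * m + t < w * m" if "k < w"
    using that Suc.prems(3) by (rule block_index_less)
  ultimately show ?case
    using Suc by (cases "k < w") (auto simp: nth_append not_less_less_Suc_eq)
qed simp

lemma nth_Eg:
  assumes "\<And>g. length (xv g) = m" "k < w" "t < m"
  shows "Eg w e xv g ! (k * m + t) = xv (e g k) ! t"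
  unfolding Eg_def using assms by (intro nth_concat_blocks) auto

lemma concat_in_sign_cube:
  "(\<And>x. x \<in> set xs \<Longrightarrow> x \<in> sign_cube d) \<Longrightarrow> concat xs \<in> sign_cube (length xs * d)"
  by (induction xs) (auto simp: sign_cube_def)

lemma list_power_subset_sign_cube: "X \<subseteq> sign_cube d \<Longrightarrow> list_power X w \<subseteq> sign_cube (d * w)"
  unfolding list_power_def using concat_in_sign_cube by (fastforce simp: mult.commute)

lemma Eg_in_sign_cube: "(\<And>g. xv g \<in> sign_cube m) \<Longrightarrow> Eg w e xv g \<in> sign_cube (w * m)"
  unfolding Eg_def using concat_in_sign_cube[of "map (\<lambda>k. xv (e g k)) [0..<w]" m] by auto

lemma length_fout: "length (fout fstar L xv g) = card L"
  by (simp add: fout_def)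

lemma nth_fout: "t < card L \<Longrightarrow> fout fstar L xv g ! t = fstar xv (sorted_list_of_set L ! t) g"
  by (simp add: fout_def)

lemma nth_fout_lessThan: "l < n \<Longrightarrow> fout fstar {..<n} xv g ! l = fstar xv l g"
  by (simp add: fout_def lessThan_atLeast0)

lemma fout_in_sign_cube:
  "(\<And>l. l \<in> L \<Longrightarrow> fstar xv l g \<in> {-1, 1}) \<Longrightarrow> fout fstar L xv g \<in> sign_cube (card L)"
  unfolding fout_def sign_cube_def by (cases "finite L") auto

lemma block_position_bounds:
  assumes "L \<subseteq> {..<n::nat}" "q < card L * w"
  shows "q div card L < w" "sorted_list_of_set L ! (q mod card L) \<in> L"
proof -
  have "card L > 0" using assms(2) by (cases "card L") auto
  then show "q div card L < w"
    using assms(2) by (simp add: less_mult_imp_div_less mult.commute)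
  have "finite L" using assms(1) finite_subset by blast
  then have "set (sorted_list_of_set L) = L" by simp
  moreover have "sorted_list_of_set L ! (q mod card L) \<in> set (sorted_list_of_set L)"
    by (rule nth_mem) (simp add: \<open>card L > 0\<close>)
  ultimately show "sorted_list_of_set L ! (q mod card L) \<in> L" by simp
qed

text \<open>Entry \<open>t\<close> of block \<open>k\<close> of \<open>E_g(f^*_L)\<close> is entry \<open>L_t\<close> of block \<open>k\<close> of \<open>E_g(f^*)\<close>,
  where \<open>L_t\<close> is the \<open>t\<close>-th smallest element of \<open>L\<close>.\<close>
definition layer_position :: "nat set \<Rightarrow> nat \<Rightarrow> nat \<Rightarrow> nat" where
  "layer_position L n q = q div card L * n + sorted_list_of_set L ! (q mod card L)"

lemma nth_Eg_fout:
  assumes L: "L \<subseteq> {..<n}" and q: "q < card L * w"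
  shows "Eg w e (fout fstar L xv) g ! q = Eg w e (fout fstar {..<n} xv) g ! layer_position L n q"
proof -
  let ?k = "q div card L" and ?t = "q mod card L"
  let ?l = "sorted_list_of_set L ! ?t"
  have k: "?k < w" and "?l \<in> L" using block_position_bounds[OF L q] by auto
  then have l: "?l < n" using L by auto
  have t: "?t < card L" using q by (cases "card L") auto
  have "Eg w e (fout fstar L xv) g ! q = Eg w e (fout fstar L xv) g ! (?k * card L + ?t)"
    by simp
  also have "\<dots> = fstar xv ?l (e g ?k)"
    using nth_Eg[of "fout fstar L xv", OF length_fout k t] nth_fout[OF t] by simp
  also have "\<dots> = fout fstar {..<n} xv (e g ?k) ! ?l"
    by (rule nth_fout_lessThan[OF l, symmetric])
  also have "\<dots> = Eg w e (fout fstar {..<n} xv) g ! layer_position L n q"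
    unfolding layer_position_def by (rule nth_Eg[symmetric, OF _ k l]) (simp add: length_fout)
  finally show ?thesis .
qed

lemma layer_position_less:
  assumes L: "L \<subseteq> {..<n}" and q: "q < card L * w"
  shows "layer_position L n q < w * n"
proof -
  have "sorted_list_of_set L ! (q mod card L) < n"
    using L block_position_bounds(2)[OF L q] by auto
  then show ?thesis
    unfolding layer_position_def by (rule block_index_less[OF block_position_bounds(1)[OF L q]])
qed

lemma block_coordinates_subset_layer_positions:
  assumes L: "L \<subseteq> {..<n}"
  shows "{k * n + l | k l. k < w \<and> l \<in> L} \<subseteq> layer_position L n ` {..<card L * w}"
proof
  fix p assume "p \<in> {k * n + l | k l. k < w \<and> l \<in> L}"
  then obtain k l where p: "p = k * n + l" "k < w" "l \<in> L" by blast
  have "l \<in> set (sorted_list_of_set L)" using p(3) finite_subset[OF L] by simp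
  then obtain t where t: "t < card L" "sorted_list_of_set L ! t = l"
    by (auto simp: in_set_conv_nth)
  have "p = layer_position L n (k * card L + t)" using p(1) t by (simp add: layer_position_def)
  moreover have "k * card L + t < card L * w"
    using block_index_less[OF p(2) t(1)] by (simp add: mult.commute)
  ultimately show "p \<in> layer_position L n ` {..<card L * w}" by blast
qed

lemma junta_pullback:
  assumes f: "\<forall>v\<in>sign_cube N. f v \<in> {-1, 1}" and dS: "depends_only_on S (sign_cube N) f"
    and S: "S \<subseteq> \<pi> ` {..<M}" and \<pi>: "\<pi> ` {..<M} \<subseteq> {..<N}"
  shows "\<exists>f'. (\<forall>z\<in>sign_cube M. f' z \<in> {-1, 1}) \<and> depends_on_at_most M (card S) (sign_cube M) f' \<and>
      (\<forall>z\<in>sign_cube M. \<forall>v\<in>sign_cube N. (\<forall>q<M. z ! q = v ! \<pi> q) \<longrightarrow> f' z = f v)"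
proof -
  define \<rho> where "\<rho> = inv_into {..<M} \<pi>"
  define lift where "lift z = map (\<lambda>p. if p \<in> \<pi> ` {..<M} then z ! \<rho> p else 1) [0..<N]" for z :: "real list"
  have \<rho>: "\<rho> p < M" "\<pi> (\<rho> p) = p" if "p \<in> \<pi> ` {..<M}" for p
    using inv_into_into[OF that] f_inv_into_f[OF that] unfolding \<rho>_def by auto
  have lift: "lift z \<in> sign_cube N" if "z \<in> sign_cube M" for z
    using that \<rho>(1) unfolding in_sign_cube_iff lift_def by auto
  have lift_nth: "lift z ! p = z ! \<rho> p" if "p \<in> S" for z p
  proof -
    have "p \<in> \<pi> ` {..<M}" "p < N" using that S \<pi> by auto
    then show ?thesis unfolding lift_def by simp
  qed
  have agree: "f (lift z) = f v" if "z \<in> sign_cube M" "v \<in> sign_cube N" "\<forall>p\<in>S. z ! \<rho> p = v ! p" for z v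
    using dS lift[OF that(1)] that(2,3) lift_nth unfolding depends_only_on_def by metis
  have "depends_only_on (\<rho> ` S) (sign_cube M) (f \<circ> lift)"
    unfolding depends_only_on_def using agree lift by (simp add: lift_nth)
  moreover have "\<rho> ` S \<subseteq> {..<M}" "card (\<rho> ` S) \<le> card S"
    using S \<rho>(1) finite_subset[OF S] by (auto intro: card_image_le)
  moreover have "(f \<circ> lift) z = f v" if "z \<in> sign_cube M" "v \<in> sign_cube N" "\<forall>q<M. z ! q = v ! \<pi> q" for z v
    using agree[OF that(1,2)] that(3) S \<rho> by (auto simp: subset_iff)
  ultimately show ?thesis
    using f lift unfolding depends_on_at_most_def by (intro exI[of _ "f \<circ> lift"]) auto
qed

lemma higher_layer_junta:
  assumes L: "L \<subseteq> {..<n}"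
    and ft: "\<forall>v\<in>sign_cube (w * n). ft v \<in> {-1, 1}"
    and S: "S \<subseteq> {k * n + l | k l. k < w \<and> l \<in> L}" "card S \<le> K" "depends_only_on S (sign_cube (w * n)) ft"
    and fstar: "\<forall>xv. P xv \<longrightarrow> (\<forall>l<n. \<forall>g. fstar xv l g \<in> {-1, 1})"
    and layer: "\<forall>xv. P xv \<longrightarrow> (\<forall>g. fstar xv j g = ft (Eg w e (fout fstar {..<n} xv) g))"
  shows "\<exists>ft'. (\<forall>z\<in>sign_cube (card L * w). ft' z \<in> {-1, 1}) \<and>
      depends_on_at_most (card L * w) K (sign_cube (card L * w)) ft' \<and>
      (\<forall>xv. P xv \<longrightarrow> (\<forall>g. fstar xv j g = ft' (Eg w e (fout fstar L xv) g)))"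
proof -
  have "layer_position L n ` {..<card L * w} \<subseteq> {..<w * n}"
    using layer_position_less[OF L] by auto
  then obtain ft' where ft': "\<forall>z\<in>sign_cube (card L * w). ft' z \<in> {-1, 1}"
      "depends_on_at_most (card L * w) (card S) (sign_cube (card L * w)) ft'"
      "\<forall>z\<in>sign_cube (card L * w). \<forall>v\<in>sign_cube (w * n).
         (\<forall>q<card L * w. z ! q = v ! layer_position L n q) \<longrightarrow> ft' z = ft v"
    using junta_pullback[OF ft S(3) order_trans[OF S(1) block_coordinates_subset_layer_positions[OF L]]]
    by blast
  have "fstar xv j g = ft' (Eg w e (fout fstar L xv) g)" if "P xv" for xv g
  proof -
    have "Eg w e (fout fstar L xv) g \<in> sign_cube (w * card L)"
      by (intro Eg_in_sign_cube fout_in_sign_cube) (use fstar that L in auto)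
    moreover have "Eg w e (fout fstar {..<n} xv) g \<in> sign_cube (w * card {..<n})"
      by (intro Eg_in_sign_cube fout_in_sign_cube) (use fstar that in auto)
    moreover have "\<forall>q<card L * w.
        Eg w e (fout fstar L xv) g ! q = Eg w e (fout fstar {..<n} xv) g ! layer_position L n q"
      by (intro allI impI nth_Eg_fout[OF L])
    ultimately have "ft' (Eg w e (fout fstar L xv) g) = ft (Eg w e (fout fstar {..<n} xv) g)"
      using ft'(3) by (simp add: mult.commute)
    then show ?thesis using layer that by simp
  qed
  then show ?thesis
    using ft'(1) depends_on_at_most_mono[OF ft'(2) subset_refl S(2)] by blast
qed

lemma first_layer_is_PTF:
  assumes "X \<subseteq> sign_cube d"
    and "\<forall>j\<in>J. \<exists>ft. (\<forall>x\<in>sign_cube (d * w). ft x \<in> {-1, 1}) \<and>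
            depends_on_at_most (d * w) K (sign_cube (d * w)) ft \<and> R j ft"
  shows "\<forall>j\<in>J. \<exists>ft. is_PTF (d * w) K 2 3 (xi_of K) (list_power X w) ft \<and> R j ft"
  using assms(2) junta_restriction_is_PTF[OF list_power_subset_sign_cube[OF assms(1)]] by blast

lemma higher_layer_is_PTF:
  assumes L: "L \<subseteq> {..<n}" and fstar: "\<forall>xv. P xv \<longrightarrow> (\<forall>l<n. \<forall>g. fstar xv l g \<in> {-1, 1})"
    and layer: "\<forall>j\<in>J. \<exists>ft. (\<forall>x\<in>sign_cube (w * n). ft x \<in> {-1, 1}) \<and>
        (\<exists>S. S \<subseteq> {k * n + l | k l. k < w \<and> l \<in> L} \<and> card S \<le> K \<and>
             depends_only_on S (sign_cube (w * n)) ft) \<and>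
        (\<forall>xv. P xv \<longrightarrow> (\<forall>g. fstar xv j g = ft (Eg w e (fout fstar {..<n} xv) g)))"
  shows "\<forall>j\<in>J. \<exists>ft. is_PTF (card L * w) K 2 3 (xi_of K) (sign_cube (card L * w)) ft \<and>
        (\<forall>xv. P xv \<longrightarrow> (\<forall>g. fstar xv j g = ft (Eg w e (fout fstar L xv) g)))"
proof
  fix j assume "j \<in> J"
  with layer obtain ft S where ft: "\<forall>x\<in>sign_cube (w * n). ft x \<in> {-1, 1}"
    and S: "S \<subseteq> {k * n + l | k l. k < w \<and> l \<in> L}" "card S \<le> K"
      "depends_only_on S (sign_cube (w * n)) ft"
    and rel: "\<forall>xv. P xv \<longrightarrow> (\<forall>g. fstar xv j g = ft (Eg w e (fout fstar {..<n} xv) g))"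
    by blast
  from higher_layer_junta[OF L ft S fstar rel] obtain ft'
    where ft': "\<forall>z\<in>sign_cube (card L * w). ft' z \<in> {-1, 1}"
      "depends_on_at_most (card L * w) K (sign_cube (card L * w)) ft'"
    and rel': "\<forall>xv. P xv \<longrightarrow> (\<forall>g. fstar xv j g = ft' (Eg w e (fout fstar L xv) g))"
    by blast
  show "\<exists>ft. is_PTF (card L * w) K 2 3 (xi_of K) (sign_cube (card L * w)) ft \<and>
        (\<forall>xv. P xv \<longrightarrow> (\<forall>g. fstar xv j g = ft (Eg w e (fout fstar L xv) g)))"
    by (intro exI[of _ ft'] conjI junta_restriction_is_PTF[OF order_refl ft'] rel')
qed

lemma chain_nth_subset_last:
  assumes "\<forall>i. Suc i < r \<longrightarrow> Ls ! i \<subseteq> Ls ! Suc i" "i < r"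
  shows "Ls ! i \<subseteq> Ls ! (r - 1)"
proof (rule lift_Suc_mono_le_ivl[where f = "(!) Ls" and N = "{..<r - 1}"])
  show "Ls ! n \<le> Ls ! Suc n" if "n \<in> {..<r - 1}" for n
    using assms(1) that by simp
qed (use assms(2) in auto)

theorem lemma17:
  fixes K :: nat
  assumes K1: "K \<ge> 1"
  shows
   "(\<forall>(N::nat) (X::real list set) (f::real list \<Rightarrow> real).
       N \<ge> 1 \<longrightarrow> X \<subseteq> sign_cube N \<longrightarrow> (\<forall>x\<in>X. f x \<in> {-1, 1}) \<longrightarrow>
       depends_on_at_most N K X f \<longrightarrow>
       is_PTF N K 2 3 (xi_of K) X f)
    \<and>
    (\<forall>(d::nat) (X::real list set) (w::nat) (e::'g::finite \<Rightarrow> nat \<Rightarrow> 'g) (n::nat)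
       (fstar :: ('g \<Rightarrow> real list) \<Rightarrow> nat \<Rightarrow> 'g \<Rightarrow> real) (Ls :: nat set list) (r::nat).
       X \<subseteq> sign_cube d \<longrightarrow> w \<ge> 1 \<longrightarrow> (\<forall>g. e g 0 = g) \<longrightarrow>
       (\<forall>xv. (\<forall>g. xv g \<in> X) \<longrightarrow> (\<forall>j<n. \<forall>g. fstar xv j g \<in> {-1, 1})) \<longrightarrow>
       r \<ge> 1 \<longrightarrow> length Ls = r \<longrightarrow>
       (\<forall>i. Suc i < r \<longrightarrow> Ls ! i \<subseteq> Ls ! Suc i) \<longrightarrow> Ls ! (r - 1) = {..<n} \<longrightarrow>
       (\<forall>j\<in>Ls ! 0. \<exists>ft. (\<forall>x\<in>sign_cube (d * w). ft x \<in> {-1, 1}) \<and>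
            depends_on_at_most (d * w) K (sign_cube (d * w)) ft \<and>
            (\<forall>xv. (\<forall>g. xv g \<in> X) \<longrightarrow> (\<forall>g. fstar xv j g = ft (Eg w e xv g)))) \<longrightarrow>
       (\<forall>i. 1 \<le> i \<longrightarrow> i < r \<longrightarrow> (\<forall>j\<in>Ls ! i. \<exists>ft.
            (\<forall>x\<in>sign_cube (w * n). ft x \<in> {-1, 1}) \<and>
            (\<exists>S. S \<subseteq> {k * n + l | k l. k < w \<and> l \<in> Ls ! (i - 1)} \<and> card S \<le> K \<and>
                 depends_only_on S (sign_cube (w * n)) ft) \<and>
            (\<forall>xv. (\<forall>g. xv g \<in> X) \<longrightarrow>
                 (\<forall>g. fstar xv j g = ft (Eg w e (fout fstar {..<n} xv) g))))) \<longrightarrow>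
       ((\<forall>j\<in>Ls ! 0. \<exists>ft. is_PTF (d * w) K 2 3 (xi_of K) (list_power X w) ft \<and>
            (\<forall>xv. (\<forall>g. xv g \<in> X) \<longrightarrow> (\<forall>g. fstar xv j g = ft (Eg w e xv g))))
        \<and>
        (\<forall>i. 1 \<le> i \<longrightarrow> i < r \<longrightarrow> (\<forall>j\<in>Ls ! i. \<exists>ft.
            is_PTF (card (Ls ! (i - 1)) * w) K 2 3 (xi_of K)
                   (sign_cube (card (Ls ! (i - 1)) * w)) ft \<and>
            (\<forall>xv. (\<forall>g. xv g \<in> X) \<longrightarrow>
                 (\<forall>g. fstar xv j g = ft (Eg w e (fout fstar (Ls ! (i - 1)) xv) g)))))))"
  \<comment> \<open>Of the hypotheses only the junta bounds, the chain property of \<open>Ls\<close>, its last member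
     and the sign values of \<open>fstar\<close> are used.\<close>
  apply (intro conjI allI impI)
  subgoal premises prems
    using prems(2-4) xi_of_nonneg xi_of_mult_le by (rule junta_is_PTF)
  subgoal premises prems
    using prems(1,9) by (rule first_layer_is_PTF)
  subgoal premises prems for d X w e n fstar Ls r i
  proof (rule higher_layer_is_PTF[OF _ prems(4)])
    show "Ls ! (i - 1) \<subseteq> {..<n}"
      using chain_nth_subset_last[OF prems(7), of "i - 1"] prems(8,12) by auto
  qed (use prems(10-12) in blast)
  done

end
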